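(* Let $v\in\mathbb{N}$ and $n=2^a$ for some $a\in\mathbb{Z}^+$. Define rational polynomials $y_v(k)$ by $y_0(k)=-\tfrac12$ and, for $v\ge1$, $y_v(k)=-\tfrac12(2k+3)^{2v}+\sum_{j=1}^{v}e_j^{(2v)}y_{v-j}(k)$; and $\tilde y_v(k)$ by $\tilde y_0(k)=\tfrac14$ and, for $v\ge1$, $\tilde y_v(k)=\tfrac14(2k+3)^{2v}-\sum_{j=1}^{v}\tfrac{e_j^{(2v)}}{2}\tilde y_{v-j}(k)$. Put $$\rho_v=1-2\sum_{j=1}^{v}e_j^{(2v)}y_{v-j}(-1),\qquad \tilde\rho_v=2v-\sum_{j=1}^{v}e_j^{(2v)}\tilde y_{v-j}'(-1),$$ where $'$ denotes the derivative in $k$. Then $\rho_v$ is an odd integer, $\tilde\rho_v$ is an even integer (both independent of $n$), and $$\sum_{k=0}^{n-1}(2k+1)^{2v+1}D_k\equiv \rho_v n\pmod{n^3},\qquad \sum_{k=0}^{n-1}(-1)^k(2k+1)^{2v+1}D_k\equiv \tilde\rho_v n^2\pmod{n^3}.$$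
   Context: $D_n=\sum_{k=0}^{n}\binom{n}{k}\binom{n+k}{k}$ are the central Delannoy numbers. For $s\in\mathbb{N}$ and $1\le j\le\lfloor (s+1)/2\rfloor$, $e_j^{(s)}=\binom{s}{2j}2^{2j-1}+\binom{s}{2j-1}2^{2j-2}$ (these are even integers when $s$ is even). *)

theory Defs
  imports "HOL-Computational_Algebra.Polynomial"
begin

definition delannoy :: "nat \<Rightarrow> nat" where
  "delannoy n = (\<Sum>k=0..n. (n choose k) * ((n + k) choose k))"

text \<open>The coefficients e_j^{(s)}, used only for j >= 1.\<close>
definition ecoef :: "nat \<Rightarrow> nat \<Rightarrow> nat" where
  "ecoef s j = (s choose (2*j)) * 2^(2*j - 1) + (s choose (2*j - 1)) * 2^(2*j - 2)"

text \<open>The rational polynomials y_v(k) in the variable k (here [:3,2:] = 2k+3).\<close>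
function ypoly :: "nat \<Rightarrow> rat poly" where
  "ypoly v = (if v = 0 then [:-1/2:]
     else smult (-1/2) ([:3, 2:] ^ (2*v))
          + (\<Sum>j=1..v. smult (of_nat (ecoef (2*v) j)) (ypoly (v - j))))"
  by auto
termination by (relation "measure id") auto

function ytpoly :: "nat \<Rightarrow> rat poly" where
  "ytpoly v = (if v = 0 then [:1/4:]
     else smult (1/4) ([:3, 2:] ^ (2*v))
          - (\<Sum>j=1..v. smult (of_nat (ecoef (2*v) j) / 2) (ytpoly (v - j))))"
  by auto
termination by (relation "measure id") auto

definition rho :: "nat \<Rightarrow> rat" where
  "rho v = 1 - 2 * (\<Sum>j=1..v. of_nat (ecoef (2*v) j) * poly (ypoly (v - j)) (-1))"

definition rhot :: "nat \<Rightarrow> rat" where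
  "rhot v = 2 * of_nat v - (\<Sum>j=1..v. of_nat (ecoef (2*v) j) * poly (pderiv (ytpoly (v - j))) (-1))"

end

(* Summation by parts against the recurrence (k+1) D(k+1) = 3(2k+1) D(k) - k D(k-1), with weights
   eps^k (2k-1)^(2v) for eps = 1 and eps = -1, expresses the moment of order v through the moments of
   orders v - j with coefficients e_j^(2v), plus a boundary term built from D(n) and D(n-1); the e_j
   enter through (x+1)(x+2)^(2v) + (x-1)(x-2)^(2v) = 2x^(2v+1) + 4 sum_j e_j x^(2v-2j+1).
   For n = 2^a the 2-adic valuations of binom(n,k) give D(n) == 1 (mod n^2) and
   D(n) + D(n-1) == 0 (mod 4n^2), which pins the boundary terms down to 2n (mod 2n^3) and
   -8vn^2 (mod 4n^3). Induction on v then yields the congruences with integers obeying the same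
   recursions as rho and rhot; these recursions hold because 2k+3 = 1 at k = -1. *)

theory Submission
  imports Defs "HOL-Number_Theory.Cong"
begin

section \<open>The Delannoy recurrence and power moments\<close>

definition delannoy_term :: "nat \<Rightarrow> nat \<Rightarrow> int" where
  "delannoy_term k j = int ((k choose j) * ((k + j) choose j))"

lemma delannoy_eq_sum_delannoy_term:
  assumes "k < N"
  shows "int (delannoy k) = (\<Sum>j<N. delannoy_term k j)"
proof -
  have "int (delannoy k) = (\<Sum>j<Suc k. delannoy_term k j)"
    by (simp add: delannoy_def delannoy_term_def atLeast0AtMost lessThan_Suc_atMost)
  also have "\<dots> = (\<Sum>j<N. delannoy_term k j)"
    using assms by (intro sum.mono_neutral_left) (auto simp: delannoy_term_def)
  finally show ?thesis .
qed

lemma delannoy_term_pochhammer: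
  "delannoy_term k j * fact j ^ 2 = pochhammer (int k - int j + 1) (2*j)"
proof (cases "j \<le> k")
  case True
  have "(fact (k + j) :: int) = pochhammer 1 ((k - j) + 2*j)"
    unfolding pochhammer_fact[symmetric] using True by (simp add: add.commute)
  also have "\<dots> = pochhammer 1 (k - j) * pochhammer (1 + of_nat (k - j)) (2*j)"
    by (rule pochhammer_product')
  also have "\<dots> = fact (k - j) * pochhammer (int k - int j + 1) (2*j)"
    using True by (simp add: pochhammer_fact of_nat_diff add.commute)
  finally have fact_sum: "(fact (k + j) :: int) = fact (k - j) * pochhammer (int k - int j + 1) (2*j)" .
  have choose_k: "(fact j * fact (k - j) * int (k choose j) :: int) = fact k"
    using binomial_fact_lemma[OF True] by (metis of_nat_fact of_nat_mult)
  have choose_kj: "(fact j * fact k * int ((k + j) choose j) :: int) = fact (k + j)"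
    using binomial_fact_lemma[of j "k + j"] by (metis add_diff_cancel_right' le_add2 of_nat_fact of_nat_mult)
  have "(delannoy_term k j * fact j ^ 2) * (fact k * fact (k - j))
      = (fact j * fact (k - j) * int (k choose j)) * (fact j * fact k * int ((k + j) choose j))"
    by (simp add: delannoy_term_def power2_eq_square algebra_simps)
  then have "(delannoy_term k j * fact j ^ 2) * (fact k * fact (k - j)) = fact k * fact (k + j)"
    unfolding choose_k choose_kj .
  then show ?thesis
    unfolding fact_sum by (simp add: algebra_simps)
next
  case False
  then have "int k - int j + 1 = - of_nat (j - k - 1)" and "j - k - 1 < 2*j"
    by auto
  then have "pochhammer (int k - int j + 1) (2*j) = 0"
    by (simp only: pochhammer_of_nat_eq_0_lemma)
  then show ?thesis
    using False by (simp add: delannoy_term_def)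
qed

text \<open>Summed over \<open>j\<close>, this certificate gives the Delannoy recurrence. After multiplication by
  \<open>(j+1)!\<^sup>2\<close> every term is the rising factorial \<open>g\<close> below times a polynomial in \<open>c = k - j\<close>.\<close>

lemma delannoy_term_certificate:
  assumes "k \<ge> 1"
  shows "(int k + 1) * delannoy_term (k + 1) (Suc j) - (2 * int k + 1) * delannoy_term k (Suc j)
           + int k * delannoy_term (k - 1) (Suc j) = 2 * (2 * int k + 1) * delannoy_term k j"
proof -
  define c where "c = int k - int j"
  define g where "g = pochhammer (c + 1) (2*j)"
  have poch: "delannoy_term k' (Suc j) * fact (Suc j) ^ 2 = pochhammer (int k' - int j) (Suc (Suc (2*j)))" for k'
    using delannoy_term_pochhammer[of k' "Suc j"] by simp
  have "int (k + 1) - int j = c + 1" "int k - int j = c" "int (k - 1) - int j = c - 1"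
    using assms by (simp_all add: c_def of_nat_diff)
  then have t1: "delannoy_term (k + 1) (Suc j) * fact (Suc j) ^ 2 = pochhammer (c + 1) (Suc (Suc (2*j)))"
    and t2: "delannoy_term k (Suc j) * fact (Suc j) ^ 2 = c * pochhammer (c + 1) (Suc (2*j))"
    and t3: "delannoy_term (k - 1) (Suc j) * fact (Suc j) ^ 2 = (c - 1) * (c * g)"
    unfolding poch g_def by (simp_all only: pochhammer_rec) simp_all
  have t0: "delannoy_term k j * fact (Suc j) ^ 2 = (int j + 1) ^ 2 * g"
    unfolding g_def c_def delannoy_term_pochhammer[symmetric] by (simp add: algebra_simps power2_eq_square)
  have "((int k + 1) * delannoy_term (k + 1) (Suc j) - (2 * int k + 1) * delannoy_term k (Suc j)
           + int k * delannoy_term (k - 1) (Suc j)) * fact (Suc j) ^ 2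
      = (int k + 1) * (delannoy_term (k + 1) (Suc j) * fact (Suc j) ^ 2)
        - (2 * int k + 1) * (delannoy_term k (Suc j) * fact (Suc j) ^ 2)
        + int k * (delannoy_term (k - 1) (Suc j) * fact (Suc j) ^ 2)"
    by (simp add: algebra_simps)
  also have "\<dots> = (2 * (2 * int k + 1) * delannoy_term k j) * fact (Suc j) ^ 2"
    unfolding t0 t1 t2 t3 mult.assoc[of "2 * (2 * int k + 1)"]
    by (simp only: pochhammer_Suc g_def[symmetric]) (simp add: c_def algebra_simps power2_eq_square)
  finally show ?thesis
    by simp
qed

lemma delannoy_recurrence:
  "(int k + 1) * int (delannoy (k + 1))
     = 3 * (2 * int k + 1) * int (delannoy k) - int k * int (delannoy (k - 1))"
proof (cases "k = 0")
  case True
  then show ?thesis by (simp add: delannoy_def numeral_3_eq_3)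
next
  case False
  define f where "f j = (int k + 1) * delannoy_term (k + 1) j - (2 * int k + 1) * delannoy_term k j
                          + int k * delannoy_term (k - 1) j" for j
  have "int (delannoy (k + 1)) = (\<Sum>j<k + 2. delannoy_term (k + 1) j)"
    and "int (delannoy k) = (\<Sum>j<k + 2. delannoy_term k j)"
    and "int (delannoy (k - 1)) = (\<Sum>j<k + 2. delannoy_term (k - 1) j)"
    by (rule delannoy_eq_sum_delannoy_term; simp)+
  then have "(\<Sum>j<k + 2. f j) = (int k + 1) * int (delannoy (k + 1)) - (2 * int k + 1) * int (delannoy k)
                             + int k * int (delannoy (k - 1))"
    unfolding f_def by (simp only: sum.distrib sum_subtractf sum_distrib_left)
  moreover have "(\<Sum>j<k + 2. f j) = 2 * (2 * int k + 1) * int (delannoy k)"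
  proof -
    have "(\<Sum>j<Suc (k + 1). f j) = f 0 + (\<Sum>j<k + 1. f (Suc j))"
      by (rule sum.lessThan_Suc_shift)
    also have "\<dots> = (\<Sum>j<k + 1. 2 * (2 * int k + 1) * delannoy_term k j)"
      using False delannoy_term_certificate[of k] by (simp add: f_def delannoy_term_def[of _ 0])
    also have "\<dots> = 2 * (2 * int k + 1) * int (delannoy k)"
      by (simp only: sum_distrib_left[symmetric] delannoy_eq_sum_delannoy_term[of k "k + 1", OF less_add_one])
    finally show ?thesis by simp
  qed
  ultimately show ?thesis
    by (simp add: algebra_simps)
qed

lemma delannoy_summation_by_parts:
  fixes b :: "nat \<Rightarrow> int"
  shows "(\<Sum>k<n. (3 * (2 * int k + 1) * b (k + 1) - (int k + 1) * b (k + 2) - int k * b k) * int (delannoy k))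
           = int n * (b n * int (delannoy n) - b (n + 1) * int (delannoy (n - 1)))"
proof (induction n)
  case 0
  then show ?case by simp
next
  case (Suc n)
  have "(\<Sum>k<Suc n. (3 * (2 * int k + 1) * b (k + 1) - (int k + 1) * b (k + 2) - int k * b k) * int (delannoy k))
      = int n * (b n * int (delannoy n) - b (n + 1) * int (delannoy (n - 1)))
        + (3 * (2 * int n + 1) * b (n + 1) - (int n + 1) * b (n + 2) - int n * b n) * int (delannoy n)"
    by (simp only: sum.lessThan_Suc Suc.IH)
  also have "\<dots> = b (n + 1) * (3 * (2 * int n + 1) * int (delannoy n) - int n * int (delannoy (n - 1)))
                    - (int n + 1) * b (n + 2) * int (delannoy n)"
    by (simp add: algebra_simps)
  also have "\<dots> = int (Suc n) * (b (Suc n) * int (delannoy (Suc n)) - b (Suc n + 1) * int (delannoy (Suc n - 1)))"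
    unfolding delannoy_recurrence[of n, symmetric] by (simp add: algebra_simps)
  finally show ?case .
qed

lemma sum_in_consecutive_pairs:
  fixes f :: "nat \<Rightarrow> 'a::comm_monoid_add"
  shows "(\<Sum>i=1..2*v. f i) = (\<Sum>j=1..v. f (2*j - 1) + f (2*j))"
  by (induction v) (simp_all add: add.assoc)

lemma ecoef_binomial_identity:
  fixes x :: "'a::comm_ring_1"
  shows "(x + 1) * (x + 2) ^ (2*v) + (x - 1) * (x - 2) ^ (2*v)
           = 2 * x ^ (2*v + 1) + 4 * (\<Sum>j=1..v. of_nat (ecoef (2*v) j) * x ^ (2*(v - j) + 1))"
proof -
  define f where "f i = of_nat (2*v choose i) * x ^ (2*v - i) * ((x + 1) * 2 ^ i + (x - 1) * (- 2) ^ i)" for i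
  have pair: "f (2*j - 1) + f (2*j) = 4 * (of_nat (ecoef (2*v) j) * x ^ (2*(v - j) + 1))" if j: "j \<in> {1..v}" for j
  proof -
    obtain i where i: "j = Suc i" using j by (cases j) auto
    have "2*v - (2*j - 1) = 2*(v - j) + 1" "2*v - 2*j = 2*(v - j)"
      using j by auto
    then show ?thesis
      by (simp add: f_def i ecoef_def algebra_simps)
  qed
  have "(x + 2) ^ (2*v) = (\<Sum>i\<le>2*v. of_nat (2*v choose i) * 2 ^ i * x ^ (2*v - i))"
    using binomial_ring[of 2 x "2*v"] by (simp add: add.commute)
  moreover have "(x - 2) ^ (2*v) = (\<Sum>i\<le>2*v. of_nat (2*v choose i) * (- 2) ^ i * x ^ (2*v - i))"
    using binomial_ring[of "- 2" x "2*v"] by simp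
  ultimately have "(x + 1) * (x + 2) ^ (2*v) + (x - 1) * (x - 2) ^ (2*v) = (\<Sum>i\<le>2*v. f i)"
    by (simp add: f_def sum_distrib_left sum.distrib[symmetric] algebra_simps)
  also have "\<dots> = f 0 + (\<Sum>i=1..2*v. f i)"
    by (simp add: atMost_atLeast0 sum.atLeast_Suc_atMost)
  also have "f 0 = 2 * x ^ (2*v + 1)"
    by (simp add: f_def algebra_simps)
  also have "(\<Sum>i=1..2*v. f i) = 4 * (\<Sum>j=1..v. of_nat (ecoef (2*v) j) * x ^ (2*(v - j) + 1))"
    unfolding sum_in_consecutive_pairs sum_distrib_left by (rule sum.cong[OF refl pair])
  finally show ?thesis .
qed

definition delannoy_moment :: "int \<Rightarrow> nat \<Rightarrow> nat \<Rightarrow> int" where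
  "delannoy_moment \<epsilon> n w = (\<Sum>k<n. \<epsilon> ^ k * (2 * int k + 1) ^ (2*w + 1) * int (delannoy k))"

text \<open>Summation by parts with weights \<open>b k = \<epsilon> ^ k * (2k - 1) ^ (2v)\<close>; the binomial identity above
  turns the summand into moments of lower order.\<close>

lemma delannoy_moment_rec:
  assumes "\<epsilon>\<^sup>2 = 1"
  shows "(3 * \<epsilon> - 1) * delannoy_moment \<epsilon> n v
           - 2 * (\<Sum>j=1..v. int (ecoef (2*v) j) * delannoy_moment \<epsilon> n (v - j))
         = int n * \<epsilon> ^ n * ((2 * int n - 1) ^ (2*v) * int (delannoy n)
                               - \<epsilon> * (2 * int n + 1) ^ (2*v) * int (delannoy (n - 1)))"
proof -
  define b where "b k = \<epsilon> ^ k * (2 * int k - 1) ^ (2*v)" for k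
  define E where "E x = (\<Sum>j=1..v. int (ecoef (2*v) j) * x ^ (2*(v - j) + 1))" for x :: int
  have summand: "3 * (2 * int k + 1) * b (k + 1) - (int k + 1) * b (k + 2) - int k * b k
                   = \<epsilon> ^ k * ((3 * \<epsilon> - 1) * (2 * int k + 1) ^ (2*v + 1) - 2 * E (2 * int k + 1))" for k
  proof -
    define x where "x = 2 * int k + 1"
    have "2 * (3 * (2 * int k + 1) * b (k + 1) - (int k + 1) * b (k + 2) - int k * b k)
        = \<epsilon> ^ k * (6 * \<epsilon> * x ^ (2*v + 1) - \<epsilon>\<^sup>2 * ((x + 1) * (x + 2) ^ (2*v)) - (x - 1) * (x - 2) ^ (2*v))"
      by (simp add: b_def x_def algebra_simps power2_eq_square)
    also have "\<dots> = 2 * (\<epsilon> ^ k * ((3 * \<epsilon> - 1) * x ^ (2*v + 1) - 2 * E x))"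
      using ecoef_binomial_identity[of x v] by (simp add: assms E_def algebra_simps)
    finally show ?thesis
      by (simp add: x_def)
  qed
  have "(\<Sum>k<n. (3 * (2 * int k + 1) * b (k + 1) - (int k + 1) * b (k + 2) - int k * b k) * int (delannoy k))
      = (\<Sum>k<n. (3 * \<epsilon> - 1) * (\<epsilon> ^ k * (2 * int k + 1) ^ (2*v + 1) * int (delannoy k))
              - 2 * (\<Sum>j=1..v. int (ecoef (2*v) j)
                       * (\<epsilon> ^ k * (2 * int k + 1) ^ (2*(v - j) + 1) * int (delannoy k))))"
    unfolding summand E_def
    by (intro sum.cong refl) (simp add: sum_distrib_left sum_distrib_right algebra_simps)
  also have "\<dots> = (3 * \<epsilon> - 1) * delannoy_moment \<epsilon> n v
           - 2 * (\<Sum>j=1..v. int (ecoef (2*v) j) * delannoy_moment \<epsilon> n (v - j))"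
    unfolding delannoy_moment_def sum_subtractf sum_distrib_left[symmetric]
    by (subst sum.swap) (simp only: sum_distrib_left[symmetric])
  finally have moments: "(\<Sum>k<n. (3 * (2 * int k + 1) * b (k + 1) - (int k + 1) * b (k + 2) - int k * b k)
                              * int (delannoy k))
      = (3 * \<epsilon> - 1) * delannoy_moment \<epsilon> n v
           - 2 * (\<Sum>j=1..v. int (ecoef (2*v) j) * delannoy_moment \<epsilon> n (v - j))" .
  show ?thesis
    using delannoy_summation_by_parts[of b n] unfolding moments by (simp add: b_def algebra_simps)
qed

section \<open>Delannoy numbers at powers of two\<close>

lemma sum_choose_mult_choose:
  assumes "j \<le> m"
  shows "(\<Sum>k\<le>m. (m choose k) * (k choose j)) = (m choose j) * 2 ^ (m - j)"
proof -
  have "(\<Sum>k\<le>m. (m choose k) * (k choose j)) = (\<Sum>k=j..m. (m choose j) * ((m - j) choose (k - j)))"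
    by (rule sum.mono_neutral_cong_right) (auto simp: choose_mult)
  also have "\<dots> = (\<Sum>i\<le>m - j. (m choose j) * ((m - j) choose i))"
    using assms by (intro sum.reindex_bij_witness[where i = "\<lambda>i. i + j" and j = "\<lambda>k. k - j"]) auto
  also have "\<dots> = (m choose j) * 2 ^ (m - j)"
    by (simp add: sum_distrib_left[symmetric] choose_row_sum)
  finally show ?thesis .
qed

lemma delannoy_eq_sum_choose_square: "delannoy m = (\<Sum>k\<le>m. (m choose k)\<^sup>2 * 2 ^ k)"
proof -
  have "delannoy m = (\<Sum>k\<le>m. \<Sum>j\<le>m. (m choose k) * (m choose j) * (k choose j))"
  proof -
    have "(m + k) choose k = (\<Sum>j\<le>m. (m choose j) * (k choose j))" if "k \<le> m" for k
    proof -
      have "(m + k) choose k = (\<Sum>j\<le>k. (m choose j) * (k choose (k - j)))"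
        using vandermonde[of m k k] by simp
      also have "\<dots> = (\<Sum>j\<le>m. (m choose j) * (k choose j))"
        using that by (intro sum.mono_neutral_cong_left) (auto simp: binomial_symmetric[symmetric])
      finally show ?thesis .
    qed
    then show ?thesis
      by (simp add: delannoy_def atMost_atLeast0[symmetric] sum_distrib_left mult.assoc)
  qed
  also have "\<dots> = (\<Sum>j\<le>m. (m choose j) * (\<Sum>k\<le>m. (m choose k) * (k choose j)))"
    by (subst sum.swap) (simp add: sum_distrib_left mult_ac)
  also have "\<dots> = (\<Sum>j\<le>m. (m choose j)\<^sup>2 * 2 ^ (m - j))"
    by (intro sum.cong) (auto simp: sum_choose_mult_choose power2_eq_square)
  also have "\<dots> = (\<Sum>k\<le>m. (m choose k)\<^sup>2 * 2 ^ k)"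
    by (intro sum.reindex_bij_witness[where i = "\<lambda>k. m - k" and j = "\<lambda>k. m - k"])
       (auto simp: binomial_symmetric[symmetric])
  finally show ?thesis .
qed

lemma prime_power_dvd_choose:
  fixes p :: nat
  assumes "prime p" "k \<ge> 1"
  shows "p ^ a dvd p ^ multiplicity p k * (p ^ a choose k)"
proof -
  have "k \<noteq> 0" "\<not> is_unit p"
    using assms by auto
  then obtain r where r: "k = p ^ multiplicity p k * r" "\<not> p dvd r"
    by (rule multiplicity_decompose')
  obtain k' where k': "k = Suc k'"
    using assms(2) by (cases k) auto
  obtain n' where n': "p ^ a = Suc n'"
    using assms(1) by (metis gr0_implies_Suc prime_gt_0_nat zero_less_power)
  have "k * (p ^ a choose k) = p ^ a * (n' choose k')"
    unfolding k' n' by (rule Suc_times_binomial)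
  then have "p ^ a dvd (p ^ multiplicity p k * (p ^ a choose k)) * r"
    by (metis dvd_triv_left mult.commute mult.left_commute r(1))
  moreover have "coprime (p ^ a) r"
    using assms(1) r(2) by (simp add: prime_imp_coprime)
  ultimately show ?thesis
    by (simp add: coprime_dvd_mult_left_iff)
qed

lemma double_le_two_power: "2 * q \<le> (2::nat) ^ q"
proof (induction q)
  case (Suc q)
  then show ?case
    by (cases q) simp_all
qed simp

lemma two_power_multiplicity_le:
  assumes "k \<ge> 1"
  shows "2 ^ multiplicity 2 k \<le> (k::nat)"
  using assms multiplicity_dvd[of 2 k] by (simp add: dvd_imp_le)

lemma two_power_dvd_choose_square:
  assumes "k \<ge> 1"
  shows "(2::nat) ^ (2*a) dvd (2 ^ a choose k)\<^sup>2 * 2 ^ k"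
proof -
  define q where "q = multiplicity 2 k"
  have "2 * q \<le> k"
    using double_le_two_power[of q] two_power_multiplicity_le[OF assms] by (simp add: q_def)
  have "(2::nat) ^ (2*a) = (2 ^ a)\<^sup>2"
    by (simp add: power_mult[symmetric] mult.commute)
  also have "\<dots> dvd (2 ^ q * (2 ^ a choose k))\<^sup>2"
    using prime_power_dvd_choose[of 2 k a] assms by (simp add: q_def)
  also have "\<dots> = (2 ^ a choose k)\<^sup>2 * 2 ^ (2 * q)"
    by (simp add: power_mult_distrib power_mult[symmetric] mult.commute)
  also have "\<dots> dvd (2 ^ a choose k)\<^sup>2 * 2 ^ k"
    using \<open>2 * q \<le> k\<close> by (simp add: le_imp_power_dvd)
  finally show ?thesis .
qed

lemma two_power_dvd_choose_product:
  assumes "1 \<le> l" "l < k"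
  shows "(2::nat) ^ (2*a + 1) dvd (2 ^ a choose l) * (2 ^ a choose k) * 2 ^ k"
proof -
  define p q where "p = multiplicity 2 l" and "q = multiplicity 2 k"
  have "2 ^ p \<le> l" "2 ^ q \<le> k"
    using assms two_power_multiplicity_le[of l] two_power_multiplicity_le[of k] by (simp_all add: p_def q_def)
  then have "p + q + 1 \<le> k"
    using double_le_two_power[of p] double_le_two_power[of q] assms(2) by linarith
  have "(2::nat) ^ (2*a + 1) = 2 ^ a * 2 ^ a * 2"
    by (simp add: power_add mult_2)
  also have "\<dots> dvd (2 ^ p * (2 ^ a choose l)) * (2 ^ q * (2 ^ a choose k)) * 2"
    using prime_power_dvd_choose[of 2 l a] prime_power_dvd_choose[of 2 k a] assms
    by (intro mult_dvd_mono) (simp_all add: p_def q_def)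
  also have "\<dots> = (2 ^ a choose l) * (2 ^ a choose k) * 2 ^ (p + q + 1)"
    by (simp add: power_add mult_ac)
  also have "\<dots> dvd (2 ^ a choose l) * (2 ^ a choose k) * 2 ^ k"
    using \<open>p + q + 1 \<le> k\<close> by (intro mult_dvd_mono dvd_refl le_imp_power_dvd)
  finally show ?thesis .
qed

lemma delannoy_two_power_cong_one:
  assumes "n = 2 ^ a"
  shows "[int (delannoy n) = 1] (mod int n ^ 2)"
proof -
  have "delannoy n = 1 + (\<Sum>k=1..n. (n choose k)\<^sup>2 * 2 ^ k)"
    by (simp add: delannoy_eq_sum_choose_square atMost_atLeast0 sum.atLeast_Suc_atMost)
  moreover have "2 ^ (2*a) dvd (\<Sum>k=1..n. (n choose k)\<^sup>2 * 2 ^ k)"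
    using assms by (intro dvd_sum) (simp add: two_power_dvd_choose_square)
  moreover have "(2::nat) ^ (2*a) = n\<^sup>2"
    using assms by (simp add: power_mult[symmetric] mult.commute)
  ultimately have "[delannoy n = 1] (mod n\<^sup>2)"
    by (metis cong_add_lcancel_0_nat cong_0_iff)
  then show ?thesis
    by (metis cong_int_iff of_nat_1 of_nat_power)
qed

lemma delannoy_Suc_add_delannoy:
  "delannoy (Suc m) + delannoy m = 2 * (\<Sum>i\<le>m. (m choose i) * (Suc m choose Suc i) * 2 ^ Suc i)"
proof -
  define U where "U = (\<Sum>i\<le>m. (m choose i)\<^sup>2 * 2 ^ Suc i)"
  define X where "X = (\<Sum>i\<le>m. (m choose i) * (m choose Suc i) * 2 ^ Suc i)"
  define W where "W = (\<Sum>i\<le>m. (m choose Suc i)\<^sup>2 * 2 ^ Suc i)"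
  have "delannoy (Suc m) = 1 + (\<Sum>i\<le>m. (Suc m choose Suc i)\<^sup>2 * 2 ^ Suc i)"
    unfolding delannoy_eq_sum_choose_square sum.atMost_Suc_shift by simp
  also have "\<dots> = 1 + U + 2 * X + W"
    unfolding U_def X_def W_def
    by (simp add: sum.distrib[symmetric] sum_distrib_left power2_eq_square algebra_simps)
  finally have "delannoy (Suc m) = 1 + U + 2 * X + W" .
  moreover have "delannoy m = 1 + W"
  proof -
    have "delannoy m = (\<Sum>k\<le>Suc m. (m choose k)\<^sup>2 * 2 ^ k)"
      by (simp add: delannoy_eq_sum_choose_square)
    then show ?thesis
      unfolding W_def by (simp only: sum.atMost_Suc_shift) simp
  qed
  moreover have "U = 2 * delannoy m"
    by (simp add: U_def delannoy_eq_sum_choose_square sum_distrib_left algebra_simps)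
  moreover have "(\<Sum>i\<le>m. (m choose i) * (Suc m choose Suc i) * 2 ^ Suc i) = U + X"
    by (simp add: U_def X_def sum.distrib[symmetric] power2_eq_square algebra_simps)
  ultimately show ?thesis
    by simp
qed

lemma choose_eq_alternating_sum: "int (m choose i) = (\<Sum>l\<le>i. (-1) ^ (i - l) * int (Suc m choose l))"
proof (induction i)
  case (Suc i)
  have "(\<Sum>l\<le>i. (-1) ^ (Suc i - l) * int (Suc m choose l)) = - (\<Sum>l\<le>i. (-1) ^ (i - l) * int (Suc m choose l))"
    by (simp add: sum_negf[symmetric] Suc_diff_le)
  then show ?case
    using Suc.IH by simp
qed simp

text \<open>Expanding \<open>m choose i\<close> as an alternating sum of \<open>Suc m choose l\<close>, the terms with \<open>l = 0\<close>
  cancel because \<open>(1 - 2) ^ Suc m = 1\<close>, and the others are divisible one by one.\<close>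

lemma two_power_dvd_sum_choose_product:
  assumes "a \<ge> 1" "2 ^ a = Suc m"
  shows "(2::int) ^ (2*a + 1) dvd (\<Sum>i\<le>m. int (m choose i) * int (Suc m choose Suc i) * 2 ^ Suc i)"
proof -
  define c where "c i = int (Suc m choose Suc i) * 2 ^ Suc i" for i
  have split: "(\<Sum>i\<le>m. int (m choose i) * c i)
      = (\<Sum>i\<le>m. (-1) ^ i * c i) + (\<Sum>i\<le>m. \<Sum>l=1..i. (-1) ^ (i - l) * int (Suc m choose l) * c i)"
  proof -
    have "int (m choose i) * c i
        = (-1) ^ i * c i + (\<Sum>l=1..i. (-1) ^ (i - l) * int (Suc m choose l) * c i)" for i
      unfolding choose_eq_alternating_sum[of m i] sum_distrib_right atMost_atLeast0
      by (simp only: sum.atLeast_Suc_atMost[of 0 i, OF le0]) simp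
    then show ?thesis
      by (simp only: sum.distrib[symmetric])
  qed
  have alternating: "(\<Sum>i\<le>m. (-1) ^ i * c i) = 0"
  proof -
    have "even (Suc m)"
      using assms by (metis dvd_power even_numeral not_one_le_zero zero_less_iff_neq_zero)
    then have "(1::int) = (-2 + 1) ^ Suc m"
      by simp
    also have "\<dots> = 1 - (\<Sum>i\<le>m. (-1) ^ i * c i)"
      unfolding binomial_ring sum.atMost_Suc_shift
      by (simp add: c_def sum_negf power_minus[of "2::int"] algebra_simps del: binomial_Suc_Suc)
    finally show ?thesis
      by simp
  qed
  have "(2::int) ^ (2*a + 1) dvd (-1) ^ (i - l) * int (Suc m choose l) * c i"
    if "l \<in> {1..i}" for i l
  proof -
    have "(2::nat) ^ (2*a + 1) dvd (2 ^ a choose l) * (2 ^ a choose Suc i) * 2 ^ Suc i"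
      using that by (intro two_power_dvd_choose_product) auto
    then have "(2::int) ^ (2*a + 1) dvd int (Suc m choose l) * c i"
      unfolding c_def assms(2) by (metis (mono_tags) int_dvd_int_iff mult.assoc of_nat_mult of_nat_numeral of_nat_power)
    then show ?thesis
      by (simp add: mult.assoc)
  qed
  then have "(2::int) ^ (2*a + 1) dvd (\<Sum>i\<le>m. \<Sum>l=1..i. (-1) ^ (i - l) * int (Suc m choose l) * c i)"
    by (blast intro: dvd_sum)
  then show ?thesis
    using split alternating by (simp add: c_def mult.assoc del: binomial_Suc_Suc)
qed

lemma delannoy_two_power_add_pred_cong:
  assumes "a \<ge> 1" "n = 2 ^ a"
  shows "[int (delannoy n) + int (delannoy (n - 1)) = 0] (mod 4 * int n ^ 2)"
proof -
  obtain m where m: "n = Suc m"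
    using assms(2) by (metis gr0_implies_Suc zero_less_numeral zero_less_power)
  have "(2::int) ^ (2*a + 1) dvd (\<Sum>i\<le>m. int (m choose i) * int (Suc m choose Suc i) * 2 ^ Suc i)"
    using assms m by (intro two_power_dvd_sum_choose_product) auto
  moreover have "int (delannoy n) + int (delannoy (n - 1))
      = 2 * (\<Sum>i\<le>m. int (m choose i) * int (Suc m choose Suc i) * 2 ^ Suc i)"
    using arg_cong[OF delannoy_Suc_add_delannoy[of m], of int] m by (simp del: binomial_Suc_Suc)
  moreover have "4 * int n ^ 2 = 2 * 2 ^ (2*a + 1)"
    using assms(2) by (simp add: power_mult[symmetric] power_add mult.commute)
  moreover have "2 * 2 ^ (2*a + 1) dvd 2 * (\<Sum>i\<le>m. int (m choose i) * int (Suc m choose Suc i) * 2 ^ Suc i)"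
    using \<open>2 ^ (2*a + 1) dvd _\<close> by (rule mult_dvd_mono[OF dvd_refl])
  ultimately show ?thesis
    by (simp add: cong_0_iff)
qed

lemma square_dvd_power_one_add:
  fixes y :: "'a::comm_ring_1"
  shows "y\<^sup>2 dvd (1 + y) ^ m - (1 + of_nat m * y)"
proof (induction m)
  case (Suc m)
  have "(1 + y) ^ Suc m - (1 + of_nat (Suc m) * y)
      = (1 + y) * ((1 + y) ^ m - (1 + of_nat m * y)) + of_nat m * y\<^sup>2"
    by (simp add: algebra_simps power2_eq_square)
  then show ?case
    using Suc.IH by simp
qed simp

lemma even_power_of_odd_cong:
  fixes n :: int
  shows "[(2 * n + 1) ^ (2*v) = 1 + 4 * int v * n] (mod 4 * n\<^sup>2)"
    and "[(2 * n - 1) ^ (2*v) = 1 - 4 * int v * n] (mod 4 * n\<^sup>2)"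
proof -
  have "(2 * n - 1) ^ (2*v) = (1 + (- 2 * n)) ^ (2*v)"
    by (simp add: power_mult power2_commute[of "2 * n" 1])
  then show "[(2 * n + 1) ^ (2*v) = 1 + 4 * int v * n] (mod 4 * n\<^sup>2)"
    and "[(2 * n - 1) ^ (2*v) = 1 - 4 * int v * n] (mod 4 * n\<^sup>2)"
    using square_dvd_power_one_add[of "2 * n" "2*v"] square_dvd_power_one_add[of "- 2 * n" "2*v"]
    by (simp_all add: cong_iff_dvd_diff power_mult_distrib add.commute mult.assoc)
qed

text \<open>The boundary terms of \<open>delannoy_moment_rec\<close> for \<open>\<epsilon> = 1\<close> and \<open>\<epsilon> = -1\<close>.\<close>

lemma delannoy_boundary_cong:
  assumes "a \<ge> 1" "n = 2 ^ a"
  shows "[(2 * int n - 1) ^ (2*v) * int (delannoy n) - (2 * int n + 1) ^ (2*v) * int (delannoy (n - 1)) = 2]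
           (mod 2 * int n ^ 2)"
    and "[(2 * int n - 1) ^ (2*v) * int (delannoy n) + (2 * int n + 1) ^ (2*v) * int (delannoy (n - 1))
            = - 8 * int v * int n] (mod 4 * int n ^ 2)"
proof -
  obtain u where u: "int (delannoy n) = 1 + int n ^ 2 * u"
    using cong_sym[OF delannoy_two_power_cong_one[OF assms(2)]] by (auto simp: cong_iff_lin)
  obtain s where "int (delannoy n) + int (delannoy (n - 1)) = 4 * int n ^ 2 * s"
    using delannoy_two_power_add_pred_cong[OF assms] unfolding cong_0_iff by (rule dvdE)
  then have s: "int (delannoy (n - 1)) = 4 * int n ^ 2 * s - int (delannoy n)"
    by simp
  obtain c1 where c1: "(2 * int n - 1) ^ (2*v) = 1 - 4 * int v * int n + 4 * int n ^ 2 * c1"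
    using cong_sym[OF even_power_of_odd_cong(2)[of "int n" v]] by (auto simp: cong_iff_lin)
  obtain c2 where c2: "(2 * int n + 1) ^ (2*v) = 1 + 4 * int v * int n + 4 * int n ^ 2 * c2"
    using cong_sym[OF even_power_of_odd_cong(1)[of "int n" v]] by (auto simp: cong_iff_lin)
  show "[(2 * int n - 1) ^ (2*v) * int (delannoy n) - (2 * int n + 1) ^ (2*v) * int (delannoy (n - 1)) = 2]
           (mod 2 * int n ^ 2)"
    unfolding cong_iff_dvd_diff
  proof
    show "(2 * int n - 1) ^ (2*v) * int (delannoy n) - (2 * int n + 1) ^ (2*v) * int (delannoy (n - 1)) - 2
        = 2 * int n ^ 2 * (u - 2 * s - 8 * int v * int n * s
                           + 2 * (c1 * int (delannoy n) - c2 * int (delannoy (n - 1))))"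
      unfolding c1 c2 s u by (simp add: algebra_simps power2_eq_square)
  qed
  show "[(2 * int n - 1) ^ (2*v) * int (delannoy n) + (2 * int n + 1) ^ (2*v) * int (delannoy (n - 1))
            = - 8 * int v * int n] (mod 4 * int n ^ 2)"
    unfolding cong_iff_dvd_diff
  proof
    show "(2 * int n - 1) ^ (2*v) * int (delannoy n) + (2 * int n + 1) ^ (2*v) * int (delannoy (n - 1))
          - (- 8 * int v * int n)
        = 4 * int n ^ 2 * (s - 2 * int v * int n * u + 4 * int v * int n * s
                           + c1 * int (delannoy n) + c2 * int (delannoy (n - 1)))"
      unfolding c1 c2 s u by (simp add: algebra_simps power2_eq_square)
  qed
qed

section \<open>Integrality of rho and rhot\<close>

declare ypoly.simps [simp del] ytpoly.simps [simp del]

lemma pderiv_sum: "pderiv (\<Sum>x\<in>A. f x) = (\<Sum>x\<in>A. pderiv (f x))"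
  using higher_pderiv_sum[of 1 f A] by simp

text \<open>At \<open>k = -1\<close> the factor \<open>2k + 3\<close> equals \<open>1\<close>.\<close>

lemma poly_ypoly_minus_one:
  "poly (ypoly v) (-1) = -1/2 + (\<Sum>j=1..v. of_nat (ecoef (2*v) j) * poly (ypoly (v - j)) (-1))"
  by (subst ypoly.simps) (simp add: poly_sum)

lemma poly_pderiv_ytpoly_minus_one:
  "poly (pderiv (ytpoly v)) (-1) =
     of_nat v - (\<Sum>j=1..v. of_nat (ecoef (2*v) j) / 2 * poly (pderiv (ytpoly (v - j))) (-1))"
  by (subst ytpoly.simps)
     (simp add: poly_sum pderiv_sum pderiv_diff pderiv_smult pderiv_power pderiv_pCons)

lemma rho_rec: "rho v = 1 + (\<Sum>j=1..v. of_nat (ecoef (2*v) j) * rho (v - j))"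
proof -
  have y: "poly (ypoly w) (-1) = - rho w / 2" for w
    unfolding rho_def poly_ypoly_minus_one[of w] by simp
  have "rho v = 1 - 2 * (\<Sum>j=1..v. of_nat (ecoef (2*v) j) * poly (ypoly (v - j)) (-1))"
    by (rule rho_def)
  then show ?thesis
    by (simp only: y) (simp add: sum_negf sum_distrib_left)
qed

lemma rhot_rec: "rhot v = 2 * of_nat v - (\<Sum>j=1..v. of_nat (ecoef (2*v) j) / 2 * rhot (v - j))"
proof -
  have y: "poly (pderiv (ytpoly w)) (-1) = rhot w / 2" for w
    unfolding rhot_def poly_pderiv_ytpoly_minus_one[of w] by (simp add: sum_divide_distrib sum_distrib_right)
  have "rhot v = 2 * of_nat v - (\<Sum>j=1..v. of_nat (ecoef (2*v) j) * poly (pderiv (ytpoly (v - j))) (-1))"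
    by (rule rhot_def)
  then show ?thesis
    by (simp only: y) (simp add: mult_ac)
qed

lemma even_ecoef:
  assumes "even s" "j \<ge> 1"
  shows "even (ecoef s j)"
proof (cases "j = 1")
  case True
  then show ?thesis using assms(1) by (simp add: ecoef_def)
next
  case False
  then show ?thesis using assms(2) by (simp add: ecoef_def)
qed

function rho_int :: "nat \<Rightarrow> int" where
  "rho_int v = 1 + (\<Sum>j=1..v. int (ecoef (2*v) j) * rho_int (v - j))"
  by auto
termination by (relation "measure id") auto

text \<open>The division is exact: \<open>ecoef (2*v) j\<close> is even for \<open>j \<ge> 1\<close>.\<close>

function rhot_int :: "nat \<Rightarrow> int" where
  "rhot_int v = 2 * int v - (\<Sum>j=1..v. int (ecoef (2*v) j div 2) * rhot_int (v - j))"
  by auto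
termination by (relation "measure id") auto

declare rho_int.simps [simp del] rhot_int.simps [simp del]

lemma rho_eq_rho_int: "rho v = of_int (rho_int v)"
proof (induction v rule: less_induct)
  case (less v)
  have "rho v = 1 + (\<Sum>j=1..v. of_nat (ecoef (2*v) j) * rho (v - j))"
    by (rule rho_rec)
  also have "\<dots> = 1 + (\<Sum>j=1..v. of_nat (ecoef (2*v) j) * of_int (rho_int (v - j)))"
    using less.IH by (intro arg_cong[where f = "(+) 1"] sum.cong) auto
  also have "\<dots> = of_int (rho_int v)"
    by (simp add: rho_int.simps[of v])
  finally show ?case .
qed

lemma rhot_eq_rhot_int: "rhot v = of_int (rhot_int v)"
proof (induction v rule: less_induct)
  case (less v)
  have half: "of_nat (ecoef (2*v) j) / 2 = (of_nat (ecoef (2*v) j div 2) :: rat)" if "j \<ge> 1" for j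
    using even_ecoef[of "2*v" j] that by (auto elim!: evenE)
  have "rhot v = 2 * of_nat v - (\<Sum>j=1..v. of_nat (ecoef (2*v) j) / 2 * rhot (v - j))"
    by (rule rhot_rec)
  also have "\<dots> = 2 * of_nat v - (\<Sum>j=1..v. of_nat (ecoef (2*v) j div 2) * of_int (rhot_int (v - j)))"
    using less.IH half by (intro arg_cong[where f = "(-) _"] sum.cong) auto
  also have "\<dots> = of_int (rhot_int v)"
    by (simp add: rhot_int.simps[of v])
  finally show ?case .
qed

lemma odd_rho_int: "odd (rho_int v)"
proof -
  have "even (\<Sum>j=1..v. int (ecoef (2*v) j) * rho_int (v - j))"
    by (intro dvd_sum) (simp add: even_ecoef)
  then show ?thesis
    by (simp add: rho_int.simps[of v])
qed

lemma even_rhot_int: "even (rhot_int v)"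
proof (induction v rule: less_induct)
  case (less v)
  then have "even (\<Sum>j=1..v. int (ecoef (2*v) j div 2) * rhot_int (v - j))"
    by (intro dvd_sum) auto
  then show ?case
    by (simp add: rhot_int.simps[of v])
qed

lemma delannoy_moment_one_cong:
  assumes "a \<ge> 1" "n = 2 ^ a"
  shows "[delannoy_moment 1 n v = rho_int v * int n] (mod int n ^ 3)"
proof (induction v rule: less_induct)
  case (less v)
  define S where "S = (\<Sum>j=1..v. int (ecoef (2*v) j) * delannoy_moment 1 n (v - j))"
  obtain k where k: "(2 * int n - 1) ^ (2*v) * int (delannoy n) - (2 * int n + 1) ^ (2*v) * int (delannoy (n - 1))
                        = 2 + 2 * int n ^ 2 * k"
    using cong_sym[OF delannoy_boundary_cong(1)[OF assms, of v]] unfolding cong_iff_lin by blast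
  have "2 * delannoy_moment 1 n v - 2 * S
      = int n * ((2 * int n - 1) ^ (2*v) * int (delannoy n) - (2 * int n + 1) ^ (2*v) * int (delannoy (n - 1)))"
    using delannoy_moment_rec[of 1 n v] by (simp add: S_def)
  then have "delannoy_moment 1 n v = int n + S + int n ^ 3 * k"
    unfolding k
    by (simp add: algebra_simps power2_eq_square power3_eq_cube)
  then have "[delannoy_moment 1 n v = int n + S] (mod int n ^ 3)"
    by (simp add: cong_iff_dvd_diff)
  also have "[int n + S = int n + (\<Sum>j=1..v. int (ecoef (2*v) j) * (rho_int (v - j) * int n))] (mod int n ^ 3)"
    unfolding S_def using less.IH by (intro cong_add cong_refl cong_sum cong_scalar_left) auto
  also have "int n + (\<Sum>j=1..v. int (ecoef (2*v) j) * (rho_int (v - j) * int n)) = rho_int v * int n"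
    by (simp add: rho_int.simps[of v] distrib_right sum_distrib_right mult.assoc)
  finally show ?case .
qed

lemma delannoy_moment_minus_one_cong:
  assumes "a \<ge> 1" "n = 2 ^ a"
  shows "[delannoy_moment (-1) n v = rhot_int v * int n ^ 2] (mod int n ^ 3)"
proof (induction v rule: less_induct)
  case (less v)
  define S where "S = (\<Sum>j=1..v. int (ecoef (2*v) j div 2) * delannoy_moment (-1) n (v - j))"
  have "even n"
    using assms by simp
  have halve: "int (ecoef (2*v) j) = 2 * int (ecoef (2*v) j div 2)" if "j \<in> {1..v}" for j
    using even_ecoef[of "2*v" j] that by auto
  obtain k where k: "(2 * int n - 1) ^ (2*v) * int (delannoy n) + (2 * int n + 1) ^ (2*v) * int (delannoy (n - 1))
                        = - 8 * int v * int n + 4 * int n ^ 2 * k"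
    using cong_sym[OF delannoy_boundary_cong(2)[OF assms, of v]] unfolding cong_iff_lin by blast
  have "(\<Sum>j=1..v. int (ecoef (2*v) j) * delannoy_moment (-1) n (v - j)) = 2 * S"
    unfolding S_def sum_distrib_left by (intro sum.cong refl) (simp add: halve)
  then have "- 4 * delannoy_moment (-1) n v - 4 * S
      = int n * ((2 * int n - 1) ^ (2*v) * int (delannoy n) + (2 * int n + 1) ^ (2*v) * int (delannoy (n - 1)))"
    using delannoy_moment_rec[of "-1" n v] \<open>even n\<close> by simp
  then have "delannoy_moment (-1) n v = 2 * int v * int n ^ 2 - S - int n ^ 3 * k"
    unfolding k
    by (simp add: algebra_simps power2_eq_square power3_eq_cube)
  then have "[delannoy_moment (-1) n v = 2 * int v * int n ^ 2 - S] (mod int n ^ 3)"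
    by (simp add: cong_iff_dvd_diff)
  also have "[2 * int v * int n ^ 2 - S
      = 2 * int v * int n ^ 2 - (\<Sum>j=1..v. int (ecoef (2*v) j div 2) * (rhot_int (v - j) * int n ^ 2))]
      (mod int n ^ 3)"
    unfolding S_def using less.IH by (intro cong_diff cong_refl cong_sum cong_scalar_left) auto
  also have "2 * int v * int n ^ 2 - (\<Sum>j=1..v. int (ecoef (2*v) j div 2) * (rhot_int (v - j) * int n ^ 2))
      = rhot_int v * int n ^ 2"
    by (simp add: rhot_int.simps[of v] left_diff_distrib sum_distrib_right mult.assoc)
  finally show ?case .
qed

theorem theorem1p3:
  fixes v a n :: nat
  assumes "a \<ge> 1" and "n = 2 ^ a"
  shows "(\<exists>r::int. rho v = of_int r \<and> odd r \<and>
            (\<Sum>k<n. (2 * int k + 1) ^ (2*v+1) * int (delannoy k)) mod (int n ^ 3) = (r * int n) mod (int n ^ 3))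
       \<and> (\<exists>r::int. rhot v = of_int r \<and> even r \<and>
            (\<Sum>k<n. (-1) ^ k * (2 * int k + 1) ^ (2*v+1) * int (delannoy k)) mod (int n ^ 3) = (r * int n ^ 2) mod (int n ^ 3))"
proof (intro conjI exI)
  show "rho v = of_int (rho_int v)" "odd (rho_int v)"
    by (rule rho_eq_rho_int, rule odd_rho_int)
  show "rhot v = of_int (rhot_int v)" "even (rhot_int v)"
    by (rule rhot_eq_rhot_int, rule even_rhot_int)
  show "(\<Sum>k<n. (2 * int k + 1) ^ (2*v+1) * int (delannoy k)) mod (int n ^ 3) = (rho_int v * int n) mod (int n ^ 3)"
    using delannoy_moment_one_cong[OF assms, of v] by (simp add: delannoy_moment_def cong_def)
  show "(\<Sum>k<n. (-1) ^ k * (2 * int k + 1) ^ (2*v+1) * int (delannoy k)) mod (int n ^ 3)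
          = (rhot_int v * int n ^ 2) mod (int n ^ 3)"
    using delannoy_moment_minus_one_cong[OF assms, of v] by (simp add: delannoy_moment_def cong_def)
qed

end
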